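(* Let $n,m,m'\in\mathbb{N}$ with $\gcd(m,m')=1$, and let $\{R_j\}_{j\in J}$ be a system of representatives of the right cosets in $\Gamma_0(mm'n)\backslash\Gamma_0(mn)$. Then $\{B_mR_jB_m^{-1}\}_{j\in J}$ is a system of representatives of the right cosets in $\Gamma_0(m'n)\backslash\Gamma_0(n)$.
   Context: $B_m=\begin{pmatrix}m&0\\0&1\end{pmatrix}$; $\Gamma_0(N)=\{\begin{pmatrix}a&b\\c&d\end{pmatrix}\in SL(2,\mathbb{Z}):N\mid c\}$. A system of representatives $\{R_j\}$ of the right cosets in $H\backslash G$ means $G=\bigsqcup_jHR_j$ (disjoint union). *)

theory Defs
  imports "HOL-Analysis.Analysis"
begin

text \<open>2x2 matrices are represented as real matrices; integrality is a predicate.\<close>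

definition SL2Z :: "(real^2^2) set" where
  "SL2Z = {A. (\<forall>i j. A $ i $ j \<in> \<int>) \<and> det A = 1}"

definition Gamma0 :: "nat \<Rightarrow> (real^2^2) set" where
  "Gamma0 N = {A \<in> SL2Z. \<exists>k::int. A $ 2 $ 1 = of_int (int N * k)}"

definition Bmat :: "nat \<Rightarrow> real^2^2" where
  "Bmat m = (\<chi> i j. if i = j then (if i = 1 then real m else 1) else 0)"

definition right_coset_reps :: "(real^2^2) set \<Rightarrow> (real^2^2) set \<Rightarrow> ('j \<Rightarrow> real^2^2) \<Rightarrow> 'j set \<Rightarrow> bool" where
  "right_coset_reps H G R J \<longleftrightarrow>
     G = (\<Union>j\<in>J. (\<lambda>h. h ** R j) ` H) \<and>
     (\<forall>i\<in>J. \<forall>j\<in>J. i \<noteq> j \<longrightarrow> (\<lambda>h. h ** R i) ` H \<inter> (\<lambda>h. h ** R j) ` H = {})"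

end

(* Conjugation by B_m maps Gamma0(m N) isomorphically onto the intersection of Gamma0(N) with
   Gamma^0(m) (here Gamma0_upper m), the group of matrices in SL(2,Z) whose upper right entry is
   divisible by m. Hence the B_m R_j B_m^-1 represent the right cosets of the intersection of H and
   K' in K', where H = Gamma0(m' n), K = Gamma0(n) and K' is the intersection of K and Gamma^0(m).
   For subgroups H and K' of K, the natural map from these cosets to the right cosets of H in K is
   always injective, and it is surjective when K = H K'. This factorisation holds here: given
   (a b; nc d) in Gamma0(n), coprimality of m and m' lets us shift d by a multiple of m' n b into a
   residue prime to m, and this yields an element of Gamma0(m' n) whose product with (a b; nc d)
   has upper right entry divisible by m. *)

theory Submission
  imports Defs "HOL-Algebra.Coset" "HOL-Computational_Algebra.Primes"
begin

section \<open>Right coset representatives in a group\<close>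

definition rcoset_reps :: "('a, 'b) monoid_scheme \<Rightarrow> 'a set \<Rightarrow> 'a set \<Rightarrow> ('j \<Rightarrow> 'a) \<Rightarrow> 'j set \<Rightarrow> bool"
  where "rcoset_reps G H K R J \<longleftrightarrow>
    K = (\<Union>j\<in>J. H #>\<^bsub>G\<^esub> R j) \<and> disjoint_family_on (\<lambda>j. H #>\<^bsub>G\<^esub> R j) J"

lemma (in group_hom) rcoset_reps_image:
  assumes inj: "inj_on h (carrier G)" and "I \<subseteq> carrier G" "K \<subseteq> carrier G" "R ` J \<subseteq> K"
    and reps: "rcoset_reps G I K R J"
  shows "rcoset_reps H (h ` I) (h ` K) (h \<circ> R) J"
proof -
  have R: "R j \<in> carrier G" if "j \<in> J" for j
    using that assms(3,4) by blast
  have coset: "h ` (I #>\<^bsub>G\<^esub> R j) = h ` I #>\<^bsub>H\<^esub> h (R j)" if "j \<in> J" for j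
    using R[OF that] \<open>I \<subseteq> carrier G\<close> by (force simp: r_coset_def)
  have sub: "I #>\<^bsub>G\<^esub> R j \<subseteq> carrier G" if "j \<in> J" for j
    using R[OF that] \<open>I \<subseteq> carrier G\<close> by (rule G.r_coset_subset_G[rotated])
  have "h ` K = (\<Union>j\<in>J. h ` I #>\<^bsub>H\<^esub> h (R j))"
    using reps coset unfolding rcoset_reps_def by (simp add: image_UN)
  moreover have "disjoint_family_on (\<lambda>j. h ` I #>\<^bsub>H\<^esub> h (R j)) J"
    using reps inj_on_image_Int[OF inj sub sub] coset
    unfolding rcoset_reps_def disjoint_family_on_def by (metis image_empty)
  ultimately show ?thesis
    unfolding rcoset_reps_def by simp
qed

lemma (in group) rcos_Int_empty_iff:
  assumes "subgroup H G" "x \<in> carrier G" "y \<in> carrier G"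
  shows "(H #> x) \<inter> (H #> y) = {} \<longleftrightarrow> x \<otimes> inv y \<notin> H"
proof
  assume "(H #> x) \<inter> (H #> y) = {}"
  then show "x \<otimes> inv y \<notin> H"
    using rcos_self[OF assms(2,1)] subgroup.rcos_module_rev[OF assms(1) is_group assms(3,2)] by blast
next
  assume "x \<otimes> inv y \<notin> H"
  show "(H #> x) \<inter> (H #> y) = {}"
  proof (rule ccontr)
    assume "(H #> x) \<inter> (H #> y) \<noteq> {}"
    then obtain z where "z \<in> H #> x" "z \<in> H #> y"
      by blast
    then have "H #> x = H #> y"
      using repr_independence assms by metis
    then have "x \<in> H #> y"
      using rcos_self[OF assms(2,1)] by simp
    then show False
      using subgroup.rcos_module_imp[OF assms(1) is_group assms(3)] \<open>x \<otimes> inv y \<notin> H\<close> by blast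
  qed
qed

lemma (in group) rcoset_reps_extend:
  assumes H: "subgroup H G" and K: "subgroup K G" and K': "subgroup K' G"
    and "H \<subseteq> K" "K' \<subseteq> K" and factor: "K \<subseteq> H <#> K'" and "R ` J \<subseteq> K'"
    and reps: "rcoset_reps G (H \<inter> K') K' R J"
  shows "rcoset_reps G H K R J"
proof -
  have HK': "subgroup (H \<inter> K') G"
    using H K' by (rule subgroups_Inter_pair)
  have RK': "R j \<in> K'" and R: "R j \<in> carrier G" if "j \<in> J" for j
    using that \<open>R ` J \<subseteq> K'\<close> subgroup.subset[OF K'] by auto
  have "x \<in> (\<Union>j\<in>J. H #> R j)" if "x \<in> K" for x
  proof -
    obtain h y where h: "h \<in> H" and y: "y \<in> K'" and x: "x = h \<otimes> y"
      using factor \<open>x \<in> K\<close> unfolding set_mult_def by blast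
    then obtain j h' where j: "j \<in> J" and h': "h' \<in> H" and y_eq: "y = h' \<otimes> R j"
      using reps unfolding rcoset_reps_def r_coset_def by blast
    have "x = (h \<otimes> h') \<otimes> R j"
      using h h' R[OF j] subgroup.subset[OF H] by (simp add: x y_eq m_assoc subset_iff)
    then show ?thesis
      using j h h' subgroup.m_closed[OF H] unfolding r_coset_def by blast
  qed
  moreover have "H #> R j \<subseteq> K" if "j \<in> J" for j
    using RK'[OF that] \<open>H \<subseteq> K\<close> \<open>K' \<subseteq> K\<close> subgroup.m_closed[OF K]
    unfolding r_coset_def by blast
  moreover have "(H #> R i) \<inter> (H #> R j) = {}" if "i \<in> J" "j \<in> J" "i \<noteq> j" for i j
  proof -
    have "R i \<otimes> inv R j \<notin> H \<inter> K'"
      using reps that rcos_Int_empty_iff[OF HK' R R] unfolding rcoset_reps_def disjoint_family_on_def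
      by blast
    moreover have "R i \<otimes> inv R j \<in> K'"
      using RK' that subgroup.m_closed[OF K'] subgroup.m_inv_closed[OF K'] by blast
    ultimately show ?thesis
      using rcos_Int_empty_iff[OF H R R] that by blast
  qed
  ultimately show ?thesis
    unfolding rcoset_reps_def disjoint_family_on_def by blast
qed

section \<open>Shifting an integer into a residue class prime to a modulus\<close>

lemma prime_dvd_prod_primes_iff:
  fixes q :: "'a :: factorial_semiring"
  assumes "finite S" "\<forall>p\<in>S. prime p" "prime q"
  shows "q dvd \<Prod>S \<longleftrightarrow> q \<in> S"
proof
  assume "q dvd \<Prod>S"
  then obtain p where "p \<in> S" "q dvd p"
    using prime_dvd_prod_iff[OF assms(1,3), of "\<lambda>x. x"] by auto
  moreover from this have "q = p"
    using assms(2,3) primes_dvd_imp_eq by blast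
  ultimately show "q \<in> S"
    by simp
qed (use dvd_prodI[OF assms(1), of q "\<lambda>x. x"] in simp)

lemma exists_coprime_add_mult:
  fixes d e M :: int
  assumes "M \<noteq> 0" and gcd_coprime: "coprime (gcd d e) M"
  shows "\<exists>t. coprime (d + t * e) M"
proof -
  define S where "S = {p. prime p \<and> p dvd M \<and> \<not> p dvd d}"
  have "finite S"
    using finite_prime_divisors[OF \<open>M \<noteq> 0\<close>] unfolding S_def by (rule finite_subset[rotated]) auto
  have "coprime (d + \<Prod>S * e) M"
  proof (rule ccontr)
    assume "\<not> coprime (d + \<Prod>S * e) M"
    then obtain q where "prime q" and q_dvd_gcd: "q dvd gcd (d + \<Prod>S * e) M"
      using prime_divisor_exists[of "gcd (d + \<Prod>S * e) M"] \<open>M \<noteq> 0\<close> by auto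
    then have q: "prime q" "q dvd d + \<Prod>S * e" "q dvd M"
      by auto
    have dvd_S_iff: "q dvd \<Prod>S \<longleftrightarrow> q \<in> S"
      using prime_dvd_prod_primes_iff[OF \<open>finite S\<close> _ q(1)] unfolding S_def by blast
    show False
    proof (cases "q dvd d")
      case True
      then have "q dvd \<Prod>S * e"
        using q(2) by (simp add: dvd_add_right_iff)
      moreover have "\<not> q dvd e"
      proof
        assume "q dvd e"
        with True have "q dvd gcd d e" by simp
        then have "is_unit q"
          using coprime_common_divisor[OF gcd_coprime _ q(3)] by blast
        then show False
          using q(1) not_prime_unit by blast
      qed
      ultimately show False
        using True dvd_S_iff q(1) unfolding S_def by (simp add: prime_dvd_mult_iff)
    next
      case False
      then have "q dvd \<Prod>S * e"
        using dvd_S_iff q unfolding S_def by simp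
      then show False
        using False q(2) by (simp add: dvd_add_left_iff)
    qed
  qed
  then show ?thesis by blast
qed

definition mat2 :: "real \<Rightarrow> real \<Rightarrow> real \<Rightarrow> real \<Rightarrow> real^2^2" where
  "mat2 a b c d = (\<chi> i j. if i = 1 then (if j = 1 then a else b) else (if j = 1 then c else d))"

lemma mat2_nth [simp]:
  "mat2 a b c d $ 1 $ 1 = a" "mat2 a b c d $ 1 $ 2 = b"
  "mat2 a b c d $ 2 $ 1 = c" "mat2 a b c d $ 2 $ 2 = d"
  by (simp_all add: mat2_def)

lemma mat2_eq_iff: "mat2 a b c d = mat2 a' b' c' d' \<longleftrightarrow> a = a' \<and> b = b' \<and> c = c' \<and> d = d'"
  by (metis mat2_nth)

lemma mat2_cases: obtains a b c d where "A = mat2 a b c d"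
proof
  show "A = mat2 (A$1$1) (A$1$2) (A$2$1) (A$2$2)"
    by (simp add: vec_eq_iff forall_2)
qed

lemma mat2_mult: "mat2 a b c d ** mat2 a' b' c' d' = mat2 (a*a' + b*c') (a*b' + b*d') (c*a' + d*c') (c*b' + d*d')"
  by (simp add: vec_eq_iff forall_2 matrix_matrix_mult_def sum_2)

lemma det_mat2: "det (mat2 a b c d) = a*d - b*c"
  by (simp add: det_2)

lemma mat_1_eq_mat2: "mat 1 = mat2 1 0 0 1"
  by (simp add: vec_eq_iff forall_2 mat_def)

lemma Bmat_eq_mat2: "Bmat m = mat2 (real m) 0 0 1"
  by (simp add: vec_eq_iff forall_2 Bmat_def)

lemma matrix_inv_eqI:
  fixes A B :: "'a::comm_ring_1^'n^'n"
  assumes "A ** B = mat 1" "B ** A = mat 1"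
  shows "matrix_inv A = B"
proof -
  have uniq: "A' = B" if "A' ** A = mat 1" for A'
  proof -
    have "A' = A' ** (A ** B)"
      by (simp add: assms(1))
    also have "\<dots> = B"
      by (simp add: matrix_mul_assoc that)
    finally show ?thesis .
  qed
  show ?thesis
    unfolding matrix_inv_def
  proof (rule some_equality)
    show "A ** B = mat 1 \<and> B ** A = mat 1"
      using assms by blast
  qed (use uniq in blast)
qed

lemma matrix_inv_Bmat:
  assumes "m > 0" shows "matrix_inv (Bmat m) = mat2 (1 / real m) 0 0 1"
proof (rule matrix_inv_eqI)
  show "Bmat m ** mat2 (1 / real m) 0 0 1 = mat 1"
    using assms unfolding Bmat_eq_mat2 mat2_mult mat_1_eq_mat2 by simp
  show "mat2 (1 / real m) 0 0 1 ** Bmat m = mat 1"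
    using assms unfolding Bmat_eq_mat2 mat2_mult mat_1_eq_mat2 by simp
qed

section \<open>The congruence subgroups inside SL(2,R)\<close>

definition SL2R :: "(real^2^2) monoid" where
  "SL2R = \<lparr>carrier = {A. det A = 1}, mult = (**), one = mat 1\<rparr>"

lemma SL2R_simps [simp]:
  "carrier SL2R = {A. det A = 1}" "mult SL2R = (**)" "one SL2R = mat 1"
  by (simp_all add: SL2R_def)

lemma group_SL2R: "group SL2R"
proof (rule groupI)
  fix A assume "A \<in> carrier SL2R"
  moreover obtain a b c d where A: "A = mat2 a b c d"
    by (rule mat2_cases)
  ultimately have "mat2 d (-b) (-c) a \<in> carrier SL2R \<and> mat2 d (-b) (-c) a \<otimes>\<^bsub>SL2R\<^esub> A = \<one>\<^bsub>SL2R\<^esub>"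
    by (simp add: det_mat2 mat2_mult mat_1_eq_mat2 algebra_simps)
  then show "\<exists>B \<in> carrier SL2R. B \<otimes>\<^bsub>SL2R\<^esub> A = \<one>\<^bsub>SL2R\<^esub>"
    by blast
qed (simp_all add: det_mul matrix_mul_assoc)

lemma inv_SL2R_mat2:
  assumes "a*d - b*c = 1" shows "inv\<^bsub>SL2R\<^esub> (mat2 a b c d) = mat2 d (-b) (-c) a"
  using assms by (intro group.inv_equality[OF group_SL2R])
    (simp_all add: det_mat2 mat2_mult mat_1_eq_mat2 algebra_simps)

lemma rcoset_reps_SL2R_range:
  assumes "subgroup H SL2R" "rcoset_reps SL2R H K R J"
  shows "R ` J \<subseteq> K"
proof
  fix X assume "X \<in> R ` J"
  moreover have "R j \<in> H #>\<^bsub>SL2R\<^esub> R j" for j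
    using subgroup.one_closed[OF assms(1)] unfolding r_coset_def
    by (intro UN_I[of "mat 1"]) simp_all
  ultimately show "X \<in> K"
    using assms(2) unfolding rcoset_reps_def by auto
qed

lemma right_coset_reps_iff_rcoset_reps_SL2R:
  "right_coset_reps H K R J \<longleftrightarrow> rcoset_reps SL2R H K R J"
  by (simp add: right_coset_reps_def rcoset_reps_def r_coset_def disjoint_family_on_def
      UNION_singleton_eq_range)

lemma SL2Z_iff:
  "A \<in> SL2Z \<longleftrightarrow> (\<exists>a b c d. A = mat2 (of_int a) (of_int b) (of_int c) (of_int d) \<and> a*d - b*c = (1::int))"
proof
  assume "A \<in> SL2Z"
  then have int: "\<forall>i j. A $ i $ j \<in> \<int>" and "det A = 1"
    by (simp_all add: SL2Z_def)
  obtain a b c d where A: "A = mat2 a b c d"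
    by (rule mat2_cases)
  from int obtain a' b' c' d' :: int where "a = a'" "b = b'" "c = c'" "d = d'"
    unfolding A by (metis mat2_nth Ints_cases)
  moreover have "real_of_int (a'*d' - b'*c') = 1"
    using \<open>det A = 1\<close> unfolding A det_mat2 calculation by simp
  ultimately show "\<exists>a b c d. A = mat2 (of_int a) (of_int b) (of_int c) (of_int d) \<and> a*d - b*c = (1::int)"
    unfolding A of_int_eq_1_iff by blast
next
  assume "\<exists>a b c d. A = mat2 (of_int a) (of_int b) (of_int c) (of_int d) \<and> a*d - b*c = (1::int)"
  then obtain a b c d :: int where "A = mat2 (of_int a) (of_int b) (of_int c) (of_int d)" "a*d - b*c = 1"
    by blast
  moreover from this have "real_of_int (a*d - b*c) = 1"
    by simp
  ultimately show "A \<in> SL2Z"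
    by (simp add: SL2Z_def forall_2 det_mat2)
qed

lemma Gamma0_iff:
  "A \<in> Gamma0 N \<longleftrightarrow> (\<exists>a b c d. A = mat2 (of_int a) (of_int b) (of_int (int N * c)) (of_int d) \<and> a*d - b*(int N * c) = (1::int))"
proof
  assume "A \<in> Gamma0 N"
  then obtain a b c d k where A: "A = mat2 (of_int a) (of_int b) (of_int c) (of_int d)"
    and "a*d - b*c = 1" and "real_of_int c = of_int (int N * k)"
    unfolding Gamma0_def SL2Z_iff by auto
  moreover from this have "c = int N * k"
    by (simp only: of_int_eq_iff)
  ultimately show "\<exists>a b c d. A = mat2 (of_int a) (of_int b) (of_int (int N * c)) (of_int d) \<and> a*d - b*(int N * c) = (1::int)"
    by blast
next
  assume "\<exists>a b c d. A = mat2 (of_int a) (of_int b) (of_int (int N * c)) (of_int d) \<and> a*d - b*(int N * c) = (1::int)"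
  then show "A \<in> Gamma0 N"
    unfolding Gamma0_def SL2Z_iff by (auto simp del: of_int_mult)
qed

lemma Gamma0I:
  "a*d - b*(int N * c) = 1 \<Longrightarrow> mat2 (of_int a) (of_int b) (of_int (int N * c)) (of_int d) \<in> Gamma0 N"
  unfolding Gamma0_iff by blast

lemma subgroup_Gamma0: "subgroup (Gamma0 N) SL2R"
proof (rule group.subgroupI[OF group_SL2R])
  show "Gamma0 N \<subseteq> carrier SL2R"
    by (auto simp: Gamma0_def SL2Z_def)
  have "mat 1 \<in> Gamma0 N"
    using Gamma0I[of 1 1 0 N 0] by (simp add: mat_1_eq_mat2)
  then show "Gamma0 N \<noteq> {}"
    by blast
next
  fix A assume "A \<in> Gamma0 N"
  then obtain a b c d where A: "A = mat2 (of_int a) (of_int b) (of_int (int N * c)) (of_int d)"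
    and det: "a*d - b*(int N * c) = 1"
    unfolding Gamma0_iff by blast
  have "inv\<^bsub>SL2R\<^esub> A = mat2 (of_int d) (of_int (- b)) (of_int (int N * - c)) (of_int a)"
    unfolding A using det by (subst inv_SL2R_mat2) (simp_all flip: of_int_mult of_int_diff)
  moreover have "d*a - (- b)*(int N * - c) = 1"
    using det by (simp add: algebra_simps)
  ultimately show "inv\<^bsub>SL2R\<^esub> A \<in> Gamma0 N"
    using Gamma0I by presburger
next
  fix A B assume "A \<in> Gamma0 N" "B \<in> Gamma0 N"
  then obtain a b c d a' b' c' d' where
      A: "A = mat2 (of_int a) (of_int b) (of_int (int N * c)) (of_int d)" "a*d - b*(int N * c) = 1"
    and B: "B = mat2 (of_int a') (of_int b') (of_int (int N * c')) (of_int d')" "a'*d' - b'*(int N * c') = 1"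
    unfolding Gamma0_iff by blast
  have AB: "A \<otimes>\<^bsub>SL2R\<^esub> B = mat2 (of_int (a*a' + b*(int N * c'))) (of_int (a*b' + b*d'))
      (of_int (int N * (c*a' + d*c'))) (of_int (int N * c * b' + d*d'))"
    unfolding A B by (simp add: mat2_mult algebra_simps)
  have "(a*a' + b*(int N * c')) * (int N * c * b' + d*d') - (a*b' + b*d') * (int N * (c*a' + d*c'))
      = (a*d - b*(int N * c)) * (a'*d' - b'*(int N * c'))"
    by (simp add: algebra_simps)
  then show "A \<otimes>\<^bsub>SL2R\<^esub> B \<in> Gamma0 N"
    unfolding AB using A(2) B(2) by (simp only: Gamma0I mult_1)
qed

lemma Gamma0_mono:
  assumes "N dvd K" shows "Gamma0 K \<subseteq> Gamma0 N"
proof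
  fix A assume "A \<in> Gamma0 K"
  then obtain k where "A \<in> SL2Z" "A $ 2 $ 1 = of_int (int K * k)"
    unfolding Gamma0_def by blast
  moreover obtain r where "K = N * r"
    using assms by blast
  ultimately show "A \<in> Gamma0 N"
    unfolding Gamma0_def by (auto intro!: exI[of _ "int r * k"] simp: algebra_simps)
qed

definition Gamma0_upper :: "nat \<Rightarrow> (real^2^2) set" where
  "Gamma0_upper N = {A \<in> SL2Z. \<exists>k::int. A $ 1 $ 2 = of_int (int N * k)}"

section \<open>Conjugation by B_m\<close>

definition Bmat_conj :: "nat \<Rightarrow> real^2^2 \<Rightarrow> real^2^2" where
  "Bmat_conj m X = Bmat m ** X ** matrix_inv (Bmat m)"

lemma Bmat_conj_mat2:
  assumes "m > 0" shows "Bmat_conj m (mat2 a b c d) = mat2 a (real m * b) (c / real m) d"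
  using assms unfolding Bmat_conj_def matrix_inv_Bmat[OF assms] unfolding Bmat_eq_mat2 mat2_mult by simp

lemma group_hom_Bmat_conj:
  assumes "m > 0" shows "group_hom SL2R SL2R (Bmat_conj m)"
proof -
  have "Bmat_conj m \<in> hom SL2R SL2R"
  proof (rule homI)
    fix X assume "X \<in> carrier SL2R"
    moreover obtain a b c d where "X = mat2 a b c d"
      by (rule mat2_cases)
    ultimately show "Bmat_conj m X \<in> carrier SL2R"
      using assms by (simp add: Bmat_conj_mat2 det_mat2)
  next
    fix X Y
    obtain a b c d a' b' c' d' where "X = mat2 a b c d" "Y = mat2 a' b' c' d'"
      by (metis mat2_cases)
    then show "Bmat_conj m (X \<otimes>\<^bsub>SL2R\<^esub> Y) = Bmat_conj m X \<otimes>\<^bsub>SL2R\<^esub> Bmat_conj m Y"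
      using assms by (simp add: Bmat_conj_mat2 mat2_mult mat2_eq_iff field_simps)
  qed
  then show ?thesis
    by (simp add: group_hom_def group_hom_axioms_def group_SL2R)
qed

lemma inj_Bmat_conj:
  assumes "m > 0" shows "inj (Bmat_conj m)"
proof (rule injI)
  fix X Y
  obtain a b c d a' b' c' d' where "X = mat2 a b c d" "Y = mat2 a' b' c' d'"
    by (metis mat2_cases)
  then show "Bmat_conj m X = Bmat_conj m Y \<Longrightarrow> X = Y"
    using assms by (simp add: Bmat_conj_mat2 mat2_eq_iff)
qed

lemma Bmat_conj_Gamma0:
  assumes "m > 0" shows "Bmat_conj m ` Gamma0 (m * N) = Gamma0 N \<inter> Gamma0_upper m"
proof (intro equalityI subsetI)
  fix Y assume "Y \<in> Bmat_conj m ` Gamma0 (m * N)"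
  then obtain X where "X \<in> Gamma0 (m * N)" and "Y = Bmat_conj m X"
    by blast
  then obtain a b c d where det: "a*d - b*(int (m * N) * c) = 1"
    and Y: "Y = Bmat_conj m (mat2 (of_int a) (of_int b) (of_int (int (m * N) * c)) (of_int d))"
    unfolding Gamma0_iff by blast
  have Y': "Y = mat2 (of_int a) (of_int (int m * b)) (of_int (int N * c)) (of_int d)"
    using assms unfolding Y by (simp add: Bmat_conj_mat2)
  have "Y \<in> Gamma0 N"
    unfolding Y' using det by (intro Gamma0I) (simp add: algebra_simps)
  moreover from this have "Y \<in> Gamma0_upper m"
    unfolding Gamma0_upper_def by (auto simp: Gamma0_def Y' simp del: of_int_mult)
  ultimately show "Y \<in> Gamma0 N \<inter> Gamma0_upper m" ..
next
  fix Y assume Y_mem: "Y \<in> Gamma0 N \<inter> Gamma0_upper m"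
  then obtain a b c d where det: "a*d - b*(int N * c) = 1"
    and Y: "Y = mat2 (of_int a) (of_int b) (of_int (int N * c)) (of_int d)"
    using IntD1[OF Y_mem] unfolding Gamma0_iff by blast
  obtain k where "real_of_int b = of_int (int m * k)"
    using Y_mem unfolding Gamma0_upper_def Y by auto
  then have b: "b = int m * k"
    by (simp only: of_int_eq_iff)
  have "mat2 (of_int a) (of_int k) (of_int (int (m * N) * c)) (of_int d) \<in> Gamma0 (m * N)"
    using det unfolding b by (intro Gamma0I) (simp add: algebra_simps)
  moreover have "Y = Bmat_conj m (mat2 (of_int a) (of_int k) (of_int (int (m * N) * c)) (of_int d))"
    using assms unfolding Y b by (simp add: Bmat_conj_mat2)
  ultimately show "Y \<in> Bmat_conj m ` Gamma0 (m * N)"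
    by blast
qed

section \<open>Factorisation of Gamma0(n)\<close>

(* (1 + s m' n t, s) is the top row of (1 + s m' n t, s; m' n t, 1) in Gamma0(m' n), and the sum is
   the upper right entry of its product with (a b; n c d). *)
lemma exists_top_row_dvd:
  fixes a b c d n m' :: int and m :: nat
  assumes "m > 0" "coprime (int m) m'" and det: "a*d - b*(n*c) = 1"
  shows "\<exists>s t. int m dvd (1 + s*(m'*n*t))*b + s*d"
proof -
  have "coprime d (n*b)"
  proof (rule coprimeI)
    fix e assume "e dvd d" "e dvd n*b"
    then have "e dvd a*d - (n*b)*c"
      by simp
    then show "is_unit e"
      using det by (simp add: algebra_simps)
  qed
  then have "gcd d (m'*(n*b)) = gcd d m'"
    using gcd_mult_left_right_cancel[OF \<open>coprime d (n*b)\<close>, of m'] by (metis gcd.commute)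
  moreover have "coprime (gcd d m') (int m)"
    using coprime_divisors[OF gcd_dvd2 dvd_refl] \<open>coprime (int m) m'\<close> coprime_commute by blast
  ultimately have "coprime (gcd d (m'*(n*b))) (int m)"
    by simp
  then obtain t where t: "coprime (d + t*(m'*(n*b))) (int m)"
    using exists_coprime_add_mult[of "int m"] \<open>m > 0\<close> by auto
  then obtain u v where uv: "u * (d + t*(m'*(n*b))) + v * int m = 1"
    using bezout_int[of "d + t*(m'*(n*b))" "int m"] by (auto simp: coprime_iff_gcd_eq_1)
  have "(1 + (-b*u)*(m'*n*t))*b + (-b*u)*d = b - b*(u*(d + t*(m'*(n*b))))"
    by (simp add: algebra_simps)
  also have "\<dots> = b - b * (1 - v * int m)"
    using uv by (simp add: eq_diff_eq)
  also have "\<dots> = int m * (b * v)"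
    by (simp add: algebra_simps)
  finally show ?thesis
    by (intro exI[of _ "-b*u"] exI[of _ t]) simp
qed

lemma Gamma0_subset_set_mult_Gamma0_upper:
  assumes "m > 0" "coprime m m'"
  shows "Gamma0 n \<subseteq> Gamma0 (m' * n) <#>\<^bsub>SL2R\<^esub> (Gamma0 n \<inter> Gamma0_upper m)"
proof
  interpret SL2R: group SL2R
    by (rule group_SL2R)
  fix X assume X: "X \<in> Gamma0 n"
  then obtain a b c d where X_eq: "X = mat2 (of_int a) (of_int b) (of_int (int n * c)) (of_int d)"
    and det: "a*d - b*(int n * c) = 1"
    unfolding Gamma0_iff by blast
  obtain s t k where k: "(1 + s*(int m'*int n*t))*b + s*d = int m * k"
    using exists_top_row_dvd[of m "int m'" a d b "int n" c] assms det by auto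
  define h where "h = mat2 (of_int (1 + s*(int m'*int n*t))) (of_int s) (of_int (int (m'*n) * t)) (of_int 1)"
  have h: "h \<in> Gamma0 (m' * n)"
    unfolding h_def by (rule Gamma0I) (simp add: algebra_simps)
  then have "h \<in> Gamma0 n"
    using Gamma0_mono[of n "m' * n"] by auto
  then have hX: "h \<otimes>\<^bsub>SL2R\<^esub> X \<in> Gamma0 n"
    using subgroup.m_closed[OF subgroup_Gamma0] X by blast
  moreover have "(h \<otimes>\<^bsub>SL2R\<^esub> X) $ 1 $ 2 = of_int (int m * k)"
    unfolding k[symmetric] h_def X_eq by (simp add: mat2_mult)
  ultimately have "h \<otimes>\<^bsub>SL2R\<^esub> X \<in> Gamma0_upper m"
    unfolding Gamma0_upper_def Gamma0_def by blast
  moreover have "X = inv\<^bsub>SL2R\<^esub> h \<otimes>\<^bsub>SL2R\<^esub> (h \<otimes>\<^bsub>SL2R\<^esub> X)"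
    using SL2R.inv_solve_left[of X h "h \<otimes>\<^bsub>SL2R\<^esub> X"] X h
      subgroup.mem_carrier[OF subgroup_Gamma0] SL2R.m_closed by blast
  moreover have "inv\<^bsub>SL2R\<^esub> h \<in> Gamma0 (m' * n)"
    using h subgroup.m_inv_closed[OF subgroup_Gamma0] by blast
  ultimately show "X \<in> Gamma0 (m' * n) <#>\<^bsub>SL2R\<^esub> (Gamma0 n \<inter> Gamma0_upper m)"
    using hX unfolding set_mult_def by blast
qed

theorem mainTheorem11:
  fixes n m m' :: nat and R :: "'j \<Rightarrow> real^2^2" and J :: "'j set"
  assumes "n > 0" and "m > 0" and "m' > 0"
    and "coprime m m'"
    and "right_coset_reps (Gamma0 (m * m' * n)) (Gamma0 (m * n)) R J"
  shows "right_coset_reps (Gamma0 (m' * n)) (Gamma0 n)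
           (\<lambda>j. Bmat m ** R j ** matrix_inv (Bmat m)) J"
proof -
  let ?C = "Bmat_conj m"
  let ?K' = "Gamma0 n \<inter> Gamma0_upper m"
  interpret C: group_hom SL2R SL2R ?C
    using \<open>m > 0\<close> by (rule group_hom_Bmat_conj)
  have reps: "rcoset_reps SL2R (Gamma0 (m * (m' * n))) (Gamma0 (m * n)) R J"
    using assms(5) by (simp add: right_coset_reps_iff_rcoset_reps_SL2R mult.assoc)
  have image: "?C ` Gamma0 (m * n) = ?K'" "?C ` Gamma0 (m * (m' * n)) = Gamma0 (m' * n) \<inter> ?K'"
    using Bmat_conj_Gamma0[OF \<open>m > 0\<close>] Gamma0_mono[of n "m' * n"] by auto
  have R_range: "(?C \<circ> R) ` J \<subseteq> ?K'"
    using rcoset_reps_SL2R_range[OF subgroup_Gamma0 reps] image(1) by auto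
  have "rcoset_reps SL2R (Gamma0 (m' * n) \<inter> ?K') ?K' (?C \<circ> R) J"
    unfolding image(2)[symmetric] unfolding image(1)[symmetric]
    using reps inj_Bmat_conj[OF \<open>m > 0\<close>] rcoset_reps_SL2R_range[OF subgroup_Gamma0 reps]
      subgroup.subset[OF subgroup_Gamma0]
    by (intro C.rcoset_reps_image) (auto intro: inj_on_subset)
  then have "rcoset_reps SL2R (Gamma0 (m' * n)) (Gamma0 n) (?C \<circ> R) J"
    using C.subgroup_img_is_subgroup[OF subgroup_Gamma0, of "m * n"] image(1)
      Gamma0_mono[of n "m' * n"] R_range
      Gamma0_subset_set_mult_Gamma0_upper[OF \<open>m > 0\<close> \<open>coprime m m'\<close>]
    by (intro group.rcoset_reps_extend[OF group_SL2R subgroup_Gamma0 subgroup_Gamma0, where K'="?K'"]) auto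
  then show ?thesis
    by (simp add: right_coset_reps_iff_rcoset_reps_SL2R Bmat_conj_def comp_def)
qed

end
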